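(* Fix a point $\mathbf{x}'\in\Omega\subset\mathbb{R}^2$ and let $\mathbf{F}=[\mathbf{F}_1,\mathbf{F}_2]\in\mathbb{R}^{3\times 2}$ have $\operatorname{rank}(\mathbf{F})=2$. Set $$\mathbf{b}(\mathbf{F})=\frac{\mathbf{F}_1\times\mathbf{F}_2}{|\mathbf{F}_1\times\mathbf{F}_2|^2}\in\mathbb{R}^3 .$$ Then $$W_{str}(\mathbf{x}',\mathbf{F})=W_{3D}\big((\mathbf{x}',0),[\mathbf{F},\mathbf{b}(\mathbf{F})]\big),$$ where $[\mathbf{F},\mathbf{b}(\mathbf{F})]\in\mathbb{R}^{3\times3}$ is the matrix whose first two columns are those of $\mathbf{F}$ and whose third column is $\mathbf{b}(\mathbf{F})$.
   Context: Let $\Omega\subset\mathbb{R}^2$ be a bounded Lipschitz domain. At the point $\mathbf{x}'$ we are given scalars $s,s_0$ with $-1<s,s_0<\infty$ (values at $\mathbf{x}'$ of given functions $s,s_0\in L^\infty(\Omega)$) and a unit vector $\mathbf{m}\in\mathbb{S}^1\subset\mathbb{R}^2$ (the value at $\mathbf{x}'$ of the blueprinted director field). We identify $\mathbf{m}$ with $(\mathbf{m},0)^T\in\mathbb{R}^3$ whenever a vector in $\mathbb{R}^3$ is needed. Define $\lambda=\big(\tfrac{s+1}{s_0+1}\big)^{1/3}$. The 3D energy density. For $\mathbf{G}\in\mathbb{R}^{3\times3}$ with $\mathbf{G}\mathbf{m}\neq 0$, set $\mathbf{n}=\mathbf{G}\mathbf{m}/|\mathbf{G}\mathbf{m}|$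 and $$\mathbf{L}_{\mathbf{m}}=(s_0+1)^{-1/3}(\mathrm{Id}_3+s_0\,\mathbf{m}\otimes\mathbf{m}),\qquad \mathbf{L}_{\mathbf{n}}=(s+1)^{-1/3}(\mathrm{Id}_3+s\,\mathbf{n}\otimes\mathbf{n}).$$ Then $$W_{3D}\big((\mathbf{x}',0),\mathbf{G}\big)=\operatorname{tr}\big(\mathbf{G}^T\mathbf{L}_{\mathbf{n}}^{-1}\mathbf{G}\mathbf{L}_{\mathbf{m}}\big)-3 .$$ The stretching energy density. For $\mathbf{F}\in\mathbb{R}^{3\times2}$ of rank 2, let $\mathrm{I}(\mathbf{F})=\mathbf{F}^T\mathbf{F}$, $J(\mathbf{F})=\det\mathrm{I}(\mathbf{F})$ and $C_{\mathbf{m}}(\mathbf{F})=\mathbf{m}\cdot\mathrm{I}(\mathbf{F})\mathbf{m}$. Then $$W_{str}(\mathbf{x}',\mathbf{F})=\lambda\Big[\frac{1}{J(\mathbf{F})}+\frac{1}{s+1}\Big(\operatorname{tr}\mathrm{I}(\mathbf{F})+s_0\,C_{\mathbf{m}}(\mathbf{F})+s\,\frac{J(\mathbf{F})}{C_{\mathbf{m}}(\mathbf{F})}\Big)\Big]-3 .$$ *)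

theory Defs
  imports "HOL-Analysis.Analysis"
begin

definition emb3 :: "real^2 \<Rightarrow> real^3" where
  "emb3 m = vector [m$1, m$2, 0]"

definition outer :: "real^'n \<Rightarrow> real^'n \<Rightarrow> real^'n^'n" where
  "outer a b = (\<chi> i j. a$i * b$j)"

definition Lmat :: "real \<Rightarrow> real^3 \<Rightarrow> real^3^3" where
  "Lmat t v = ((t + 1) powr (-1/3)) *\<^sub>R (mat 1 + t *\<^sub>R outer v v)"

text \<open>The 3D energy density at (x',0), given the values s, s0 at x' and the director m.\<close>
definition W3D :: "real \<Rightarrow> real \<Rightarrow> real^2 \<Rightarrow> real^3^3 \<Rightarrow> real" where
  "W3D s s0 m G =
     (let n = (1 / norm (G *v emb3 m)) *\<^sub>R (G *v emb3 m)
      in trace (transpose G ** matrix_inv (Lmat s n) ** G ** Lmat s0 (emb3 m)) - 3)"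

definition FF1 :: "real^2^3 \<Rightarrow> real^2^2" where
  "FF1 F = transpose F ** F"

definition Wstr :: "real \<Rightarrow> real \<Rightarrow> real^2 \<Rightarrow> real^2^3 \<Rightarrow> real" where
  "Wstr s s0 m F =
     (let lam = ((s + 1) / (s0 + 1)) powr (1/3);
          J = det (FF1 F);
          C = m \<bullet> (FF1 F *v m)
      in lam * (1 / J + (1 / (s + 1)) * (trace (FF1 F) + s0 * C + s * J / C)) - 3)"

definition col1 :: "real^2^3 \<Rightarrow> real^3" where "col1 F = column 1 F"
definition col2 :: "real^2^3 \<Rightarrow> real^3" where "col2 F = column 2 F"

definition bvec :: "real^2^3 \<Rightarrow> real^3" where
  "bvec F = (1 / (norm (cross3 (col1 F) (col2 F)))\<^sup>2) *\<^sub>R (cross3 (col1 F) (col2 F))"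

definition augment :: "real^2^3 \<Rightarrow> real^3 \<Rightarrow> real^3^3" where
  "augment F b = (\<chi> i j. if j = 1 then F$i$1 else if j = 2 then F$i$2 else b$i)"

end

theory Submission
  imports Defs
begin

(* The column b = b(F) is orthogonal to both columns of F and |b|^2 = 1/J, so G = [F, b] satisfies
   G (m,0) = F m, |G|^2 = tr I + 1/J and |G^T F m| = |I m|.  Since L_n is a multiple of a rank-one
   update of the identity, its inverse is explicit (Sherman-Morrison), which reduces W_3D(G) to the
   norms |G|, |G (m,0)| and |G^T G (m,0)|.  Cayley-Hamilton for the symmetric 2x2 matrix I gives
   |I m|^2 = C tr I - J, and then both energies agree by elementary algebra in tr I, J and C. *)

lemma trace_transpose_mult_self:
  fixes A :: "real^'n^'m"
  shows "trace (transpose A ** A) = (norm A)\<^sup>2"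
  unfolding power2_norm_eq_inner inner_vec_def trace_def matrix_matrix_mult_def transpose_def
  by (subst sum.swap) (simp add: power2_eq_square)

lemma trace_scaleR: "trace (c *\<^sub>R A) = c * trace (A :: real^'n^'n)"
  by (simp add: trace_def sum_distrib_left)

lemma matrix_add_rdistrib: "(A + B) ** C = A ** C + B ** (C :: 'a::semiring_1^'p^'n)"
  by (vector matrix_matrix_mult_def sum.distrib[symmetric] field_simps)

lemma inner_matrix_vector_transpose:
  fixes A :: "real^'n^'m"
  shows "x \<bullet> (A *v y) = (transpose A *v x) \<bullet> y"
  by (simp add: dot_lmul_matrix)

lemma outer_mult_vector: "outer u w *v x = (w \<bullet> x) *\<^sub>R (u :: real^'n)"
  by (simp add: outer_def matrix_vector_mult_def inner_vec_def vec_eq_iff sum_distrib_left mult_ac)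

lemma outer_mult_outer: "outer u w ** outer x y = (w \<bullet> x) *\<^sub>R outer u (y :: real^'n)"
  by (simp add: outer_def matrix_matrix_mult_def inner_vec_def vec_eq_iff
      sum_distrib_left sum_distrib_right mult_ac)

lemma trace_mult_outer:
  fixes A :: "real^'n^'n"
  shows "trace (A ** outer u w) = w \<bullet> (A *v u)"
  by (simp add: trace_def outer_def matrix_matrix_mult_def matrix_vector_mult_def inner_vec_def
      sum_distrib_left mult_ac)

lemma trace_congruence_rank_one_updates:
  fixes G :: "real^'k^'n"
  shows "trace (transpose G ** (mat 1 + \<beta> *\<^sub>R outer n n) ** G ** (mat 1 + t *\<^sub>R outer e e))
    = (norm G)\<^sup>2 + t * (norm (G *v e))\<^sup>2 + \<beta> * (norm (transpose G *v n))\<^sup>2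
      + \<beta> * t * (n \<bullet> (G *v e))\<^sup>2"
proof -
  let ?P = "outer n n" and ?E = "outer e e"
  have expand: "transpose G ** (mat 1 + \<beta> *\<^sub>R ?P) ** G ** (mat 1 + t *\<^sub>R ?E)
      = transpose G ** G + t *\<^sub>R (transpose G ** G ** ?E) + \<beta> *\<^sub>R (transpose G ** ?P ** G)
        + (\<beta> * t) *\<^sub>R (transpose G ** ?P ** G ** ?E)"
    by (simp add: matrix_add_ldistrib matrix_add_rdistrib matrix_scalar_ac
        scalar_matrix_assoc[symmetric] algebra_simps)
  have "trace (transpose G ** G ** ?E) = (norm (G *v e))\<^sup>2"
    by (simp add: trace_mult_outer matrix_vector_mul_assoc[symmetric] inner_matrix_vector_transpose
        power2_norm_eq_inner inner_commute)
  moreover have "trace (transpose G ** ?P ** G) = (norm (transpose G *v n))\<^sup>2"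
    by (simp add: trace_mul_sym[of _ G] matrix_mul_assoc trace_mult_outer
        matrix_vector_mul_assoc[symmetric] inner_matrix_vector_transpose power2_norm_eq_inner)
  moreover have "trace (transpose G ** ?P ** G ** ?E) = (n \<bullet> (G *v e))\<^sup>2"
    by (simp add: trace_mult_outer matrix_vector_mul_assoc[symmetric] outer_mult_vector
        scaleR_vector_matrix_assoc inner_matrix_vector_transpose power2_eq_square inner_commute)
  ultimately show ?thesis
    by (simp add: expand trace_add trace_scaleR trace_transpose_mult_self)
qed

lemma matrix_inv_eqI:
  fixes A :: "'a::semiring_1^'n^'n"
  assumes "A ** B = mat 1" "B ** A = mat 1"
  shows "matrix_inv A = B"
proof -
  have inv: "A ** matrix_inv A = mat 1 \<and> matrix_inv A ** A = mat 1"
    unfolding matrix_inv_def by (rule someI[of _ B]) (use assms in simp)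
  have "matrix_inv A = (matrix_inv A ** A) ** B"
    using assms(1) by (simp add: matrix_mul_assoc[symmetric])
  with inv show ?thesis by simp
qed

lemma rank_one_update_mult:
  fixes u :: "real^'n"
  shows "(mat 1 + a *\<^sub>R outer u u) ** (mat 1 + b *\<^sub>R outer u u)
    = mat 1 + (a + b + a * b * (u \<bullet> u)) *\<^sub>R outer u u"
  by (simp add: matrix_add_ldistrib matrix_add_rdistrib matrix_scalar_ac scalar_matrix_assoc[symmetric]
      outer_mult_outer algebra_simps)

lemma rank_one_update_inverse:
  fixes u :: "real^'n"
  assumes "norm u = 1" "a \<noteq> -1"
  shows "(mat 1 + a *\<^sub>R outer u u) ** (mat 1 + (- a / (1 + a)) *\<^sub>R outer u u) = mat 1"
    and "(mat 1 + (- a / (1 + a)) *\<^sub>R outer u u) ** (mat 1 + a *\<^sub>R outer u u) = mat 1"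
proof -
  define b where "b = - a / (1 + a)"
  have "u \<bullet> u = 1" using assms(1) by (simp add: norm_eq_1)
  moreover have "a + b + a * b = 0"
    using assms(2) by (simp add: b_def field_simps)
  ultimately have "(mat 1 + a *\<^sub>R outer u u) ** (mat 1 + b *\<^sub>R outer u u) = mat 1"
    and "(mat 1 + b *\<^sub>R outer u u) ** (mat 1 + a *\<^sub>R outer u u) = mat 1"
    by (simp_all add: rank_one_update_mult algebra_simps)
  then show "(mat 1 + a *\<^sub>R outer u u) ** (mat 1 + (- a / (1 + a)) *\<^sub>R outer u u) = mat 1"
    and "(mat 1 + (- a / (1 + a)) *\<^sub>R outer u u) ** (mat 1 + a *\<^sub>R outer u u) = mat 1"
    unfolding b_def .
qed

lemma det_gram_matrix_nonzero:
  fixes A :: "real^'n^'m"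
  assumes "rank A = CARD('n)"
  shows "det (transpose A ** A) \<noteq> 0"
proof
  assume "det (transpose A ** A) = 0"
  then obtain x where "x \<noteq> 0" "(transpose A ** A) *v x = 0"
    using det_eq_0_rank matrix_nonfull_linear_equations_eq by (metis less_irrefl)
  moreover have "x \<bullet> ((transpose A ** A) *v x) = (norm (A *v x))\<^sup>2"
    using inner_matrix_vector_transpose[of x "transpose A" "A *v x"]
    by (simp add: matrix_vector_mul_assoc[symmetric] power2_norm_eq_inner)
  ultimately have "A *v x = A *v 0" by simp
  with \<open>x \<noteq> 0\<close> assms show False
    by (metis full_rank_injective injD)
qed

lemma cayley_hamilton_2x2:
  fixes A :: "real^2^2"
  shows "A ** A = trace A *\<^sub>R A - det A *\<^sub>R mat 1"
  by (simp add: vec_eq_iff forall_2 matrix_matrix_mult_def sum_2 trace_def det_2 mat_def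
      algebra_simps)

lemma matrix_inv_Lmat:
  assumes "-1 < s" "norm n = 1"
  shows "matrix_inv (Lmat s n) = (s + 1) powr (1/3) *\<^sub>R (mat 1 + (- s / (s + 1)) *\<^sub>R outer n n)"
proof (rule matrix_inv_eqI)
  have "s \<noteq> -1" using assms(1) by simp
  note inverse = rank_one_update_inverse[OF assms(2) this, unfolded add.commute[of 1]]
  have "(s + 1) powr (-1/3) * (s + 1) powr (1/3) = 1"
    using assms(1) by (simp add: powr_add[symmetric])
  with inverse show "Lmat s n ** ((s + 1) powr (1/3) *\<^sub>R (mat 1 + (- s / (s + 1)) *\<^sub>R outer n n)) = mat 1"
    and "(s + 1) powr (1/3) *\<^sub>R (mat 1 + (- s / (s + 1)) *\<^sub>R outer n n) ** Lmat s n = mat 1"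
    by (simp_all add: Lmat_def matrix_scalar_ac scalar_matrix_assoc[symmetric] mult.commute)
qed

lemma W3D_eq:
  fixes G :: "real^3^3"
  assumes "-1 < s" "-1 < s0" and v: "G *v emb3 m = v" "v \<noteq> 0"
  shows "W3D s s0 m G = ((s + 1) / (s0 + 1)) powr (1/3) *
      ((norm G)\<^sup>2 + (s0 * (norm v)\<^sup>2 - s * (norm (transpose G *v v))\<^sup>2 / (norm v)\<^sup>2) / (s + 1)) - 3"
proof -
  define n where "n = (1 / norm v) *\<^sub>R v"
  have "norm n = 1" using v(2) by (simp add: n_def)
  have nv: "n \<bullet> v = norm v"
    using v(2) by (simp add: n_def dot_square_norm power2_eq_square)
  have Gn: "(norm (transpose G *v n))\<^sup>2 = (norm (transpose G *v v))\<^sup>2 / (norm v)\<^sup>2"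
    by (simp add: n_def matrix_vector_mult_scaleR power_divide)
  have "W3D s s0 m G = (s + 1) powr (1/3) * (s0 + 1) powr (-1/3) *
      trace (transpose G ** (mat 1 + (- s / (s + 1)) *\<^sub>R outer n n) ** G
             ** (mat 1 + s0 *\<^sub>R outer (emb3 m) (emb3 m))) - 3"
    unfolding W3D_def Let_def v n_def[symmetric] matrix_inv_Lmat[OF assms(1) \<open>norm n = 1\<close>]
    by (simp add: Lmat_def matrix_scalar_ac scalar_matrix_assoc[symmetric] trace_scaleR)
  also have "\<dots> = (s + 1) powr (1/3) * (s0 + 1) powr (-1/3) * ((norm G)\<^sup>2 + s0 * (norm v)\<^sup>2
      + (- s / (s + 1)) * ((norm (transpose G *v v))\<^sup>2 / (norm v)\<^sup>2)
      + (- s / (s + 1)) * s0 * (norm v)\<^sup>2) - 3"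
    by (simp only: trace_congruence_rank_one_updates v(1) nv Gn)
  also have "\<dots> = ((s + 1) / (s0 + 1)) powr (1/3) *
      ((norm G)\<^sup>2 + (s0 * (norm v)\<^sup>2 - s * (norm (transpose G *v v))\<^sup>2 / (norm v)\<^sup>2) / (s + 1)) - 3"
  proof -
    have "s0 * (norm v)\<^sup>2 + (- s / (s + 1)) * ((norm (transpose G *v v))\<^sup>2 / (norm v)\<^sup>2)
        + (- s / (s + 1)) * s0 * (norm v)\<^sup>2
        = (s0 * (norm v)\<^sup>2 - s * (norm (transpose G *v v))\<^sup>2 / (norm v)\<^sup>2) / (s + 1)"
      using assms(1) v(2) by (simp add: divide_simps) (simp add: algebra_simps)
    then show ?thesis
      using assms(1,2) by (simp add: powr_divide powr_minus_divide add.assoc)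
  qed
  finally show ?thesis .
qed

lemma augment_mult_emb3: "augment F b *v emb3 x = F *v x"
  by (simp add: vec_eq_iff forall_3 matrix_vector_mult_def sum_3 sum_2 augment_def emb3_def)

lemma norm_augment: "(norm (augment F b))\<^sup>2 = (norm F)\<^sup>2 + (norm b)\<^sup>2"
  by (simp add: power2_norm_eq_inner inner_vec_def sum_3 sum_2 augment_def)

lemma norm_transpose_augment_mult:
  "(norm (transpose (augment F b) *v y))\<^sup>2 = (norm (transpose F *v y))\<^sup>2 + (b \<bullet> y)\<^sup>2"
  unfolding power2_norm_eq_inner inner_vec_def matrix_vector_mult_def transpose_def
  by (simp add: sum_3 sum_2 augment_def power2_eq_square)

lemma matrix_vector_mult_columns: "F *v x = x$1 *\<^sub>R col1 F + x$2 *\<^sub>R col2 F"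
  by (simp add: vec_eq_iff matrix_vector_mult_def sum_2 col1_def col2_def column_def mult.commute)

lemma bvec_orthogonal: "bvec F \<bullet> (F *v x) = 0"
  using orthogonal_cross[of "col1 F" "col2 F"]
  by (simp add: bvec_def matrix_vector_mult_columns inner_add_right orthogonal_def)

lemma det_FF1_eq_norm_cross: "det (FF1 F) = (norm (cross3 (col1 F) (col2 F)))\<^sup>2"
proof -
  have "det (FF1 F) = (col1 F \<bullet> col1 F) * (col2 F \<bullet> col2 F) - (col1 F \<bullet> col2 F)\<^sup>2"
    by (simp add: FF1_def matrix_mult_transpose_dot_column det_2 col1_def col2_def
        inner_commute power2_eq_square)
  also have "\<dots> = (norm (cross3 (col1 F) (col2 F)))\<^sup>2"
    using norm_cross_dot[of "col1 F" "col2 F"] unfolding power_mult_distrib power2_norm_eq_inner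
    by linarith
  finally show ?thesis .
qed

lemma norm_bvec:
  assumes "det (FF1 F) \<noteq> 0"
  shows "(norm (bvec F))\<^sup>2 = 1 / det (FF1 F)"
  using assms by (simp add: bvec_def det_FF1_eq_norm_cross power_mult_distrib power2_eq_square)

lemma trace_FF1: "trace (FF1 F) = (norm F)\<^sup>2"
  by (simp add: FF1_def trace_transpose_mult_self)

lemma transpose_mult_mult_eq_FF1: "transpose F *v (F *v x) = FF1 F *v x"
  by (simp only: FF1_def matrix_vector_mul_assoc)

lemma inner_FF1_mult: "x \<bullet> (FF1 F *v x) = (norm (F *v x))\<^sup>2"
  using inner_matrix_vector_transpose[of x "transpose F" "F *v x"]
  by (simp add: FF1_def matrix_vector_mul_assoc[symmetric] power2_norm_eq_inner)

lemma norm_FF1_mult: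
  "(norm (FF1 F *v x))\<^sup>2 = trace (FF1 F) * (x \<bullet> (FF1 F *v x)) - det (FF1 F) * (norm x)\<^sup>2"
proof -
  have "transpose (FF1 F) = FF1 F" by (simp add: FF1_def matrix_transpose_mul)
  then have "(norm (FF1 F *v x))\<^sup>2 = x \<bullet> ((FF1 F ** FF1 F) *v x)"
    using inner_matrix_vector_transpose[of x "FF1 F" "FF1 F *v x"]
    by (simp add: power2_norm_eq_inner matrix_vector_mul_assoc)
  then show ?thesis
    by (simp add: cayley_hamilton_2x2 matrix_vector_mult_diff_rdistrib
        scaleR_matrix_vector_assoc[symmetric] inner_diff_right power2_norm_eq_inner)
qed

theorem lemma2p1:
  fixes s s0 :: real and m :: "real^2" and F :: "real^2^3"
  assumes "-1 < s" and "-1 < s0"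
    and "norm m = 1"
    and "rank F = 2"
  shows "Wstr s s0 m F = W3D s s0 m (augment F (bvec F))"
proof -
  let ?v = "F *v m"
  define T J C where "T = trace (FF1 F)" and "J = det (FF1 F)" and "C = (norm ?v)\<^sup>2"
  have "J \<noteq> 0"
    using det_gram_matrix_nonzero[of F] assms(4) by (simp add: J_def FF1_def)
  have "inj ((*v) F)"
    using assms(4) by (simp add: full_rank_injective[symmetric])
  then have "?v \<noteq> 0"
    using assms(3) by (metis injD matrix_vector_mult_0_right norm_zero zero_neq_one)
  have "(norm (transpose (augment F (bvec F)) *v ?v))\<^sup>2 = (norm (FF1 F *v m))\<^sup>2"
    unfolding norm_transpose_augment_mult bvec_orthogonal transpose_mult_mult_eq_FF1 by simp
  also have "\<dots> = T * C - J"
    using assms(3) by (simp add: norm_FF1_mult inner_FF1_mult T_def J_def C_def)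
  finally have "W3D s s0 m (augment F (bvec F))
      = ((s + 1) / (s0 + 1)) powr (1/3) * (T + 1 / J + (s0 * C - s * (T * C - J) / C) / (s + 1)) - 3"
    using W3D_eq[OF assms(1,2) augment_mult_emb3 \<open>?v \<noteq> 0\<close>] norm_bvec \<open>J \<noteq> 0\<close>
    by (simp add: norm_augment T_def J_def C_def trace_FF1 add.assoc)
  also have "\<dots> = ((s + 1) / (s0 + 1)) powr (1/3) * (1 / J + 1 / (s + 1) * (T + s0 * C + s * J / C)) - 3"
    using assms(1) \<open>?v \<noteq> 0\<close> by (simp add: C_def divide_simps) (simp add: algebra_simps)
  also have "\<dots> = Wstr s s0 m F"
    by (simp add: Wstr_def Let_def T_def J_def C_def inner_FF1_mult)
  finally show ?thesis ..
qed

end
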